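(* Let $K_1,K_2$ be finite simplicial complexes on disjoint vertex sets, let $k\ge 0$, and let $K=K_1\vee_k K_2$ be a $k$-wedge sum obtained by identifying a $k$-face $F_1$ of $K_1$ with a $k$-face $F_2$ of $K_2$. If $i\ge k-1$ (and $i\ge 0$), then $B_i(K)$ is balanced if and only if both $B_i(K_1)$ and $B_i(K_2)$ are balanced.
   Context: $S_j(K)$ denotes the set of faces of cardinality $j+1$. The $k$-wedge sum: given $F_1=\{v_0,\dots,v_k\}\in S_k(K_1)$, $F_2=\{u_0,\dots,u_k\}\in S_k(K_2)$ and a bijection $v_j\mapsto u_j$, $K_1\vee_kK_2$ is the complex obtained from $K_1\cup K_2$ by identifying $v_j$ with $u_j$ for all $j$ (so $F_1$ and all its subfaces are identified with $F_2$ and its subfaces). For a complex $K$ with an orientation (ordering of each face up to even permutations), $B_i(K)$ is the signed bipartite graph with vertex set $S_i(K)\cup S_{i+1}(K)$, an edge $\{F,\bar F\}$ whenever $F\subset\bar F$, with sign $\mathrm{sgn}([F],\partial[\bar F])$ (equal to $(-1)^j$ if $F$ is $\bar F$ with its $j$-th vertex removed and the orientation of $F$ agrees with the induced one, and $-(-1)^j$ otherwise). A signed graph is balanced if every cycle has positive sign (product of edge signs); balancedness of $B_i(K)$ does not depend on the chosen orientation. *)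

theory Defs
  imports Main
begin

definition simplicial_complex :: "'v set set \<Rightarrow> bool" where
  "simplicial_complex K \<longleftrightarrow> finite K \<and>
     (\<forall>F\<in>K. finite F \<and> F \<noteq> {}) \<and>
     (\<forall>F\<in>K. \<forall>G. G \<subseteq> F \<and> G \<noteq> {} \<longrightarrow> G \<in> K)"

definition faces_of_dim :: "'v set set \<Rightarrow> nat \<Rightarrow> 'v set set" where
  "faces_of_dim K j = {F \<in> K. card F = j + 1}"

text \<open>The quotient is realised by the map that sends each vertex
of F2 to its partner in F1 and fixes all other vertices; since the vertex sets are
disjoint this is exactly the identification.\<close>
definition wedge_map :: "'v set \<Rightarrow> ('v \<Rightarrow> 'v) \<Rightarrow> 'v \<Rightarrow> 'v" where
  "wedge_map F2 f u = (if u \<in> F2 then f u else u)"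

definition wedge_sum :: "'v set set \<Rightarrow> 'v set set \<Rightarrow> 'v set \<Rightarrow> ('v \<Rightarrow> 'v) \<Rightarrow> 'v set set" where
  "wedge_sum K1 K2 F2 f = K1 \<union> ((\<lambda>G. wedge_map F2 f ` G) ` K2)"

text \<open>An orientation: for each face, an ordering of its vertices (a representative of
its class modulo even permutations).\<close>
definition orientation :: "'v set set \<Rightarrow> ('v set \<Rightarrow> 'v list) \<Rightarrow> bool" where
  "orientation K ori \<longleftrightarrow> (\<forall>F\<in>K. distinct (ori F) \<and> set (ori F) = F)"

fun pos :: "'v list \<Rightarrow> 'v \<Rightarrow> nat" where
  "pos [] x = 0"
| "pos (y # ys) x = (if y = x then 0 else Suc (pos ys x))"

text \<open>Number of inversions of the ordering xs relative to ys; its parity is the parity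
of the permutation taking ys to xs.\<close>
definition inversions :: "'v list \<Rightarrow> 'v list \<Rightarrow> nat" where
  "inversions xs ys = card {(a, b). a < b \<and> b < length xs \<and>
       pos ys (xs ! a) > pos ys (xs ! b)}"

text \<open>sgn([F], \<partial>[Fb]) for F a facet of Fb: Fb with its j-th vertex removed.\<close>
definition incidence_sign :: "('v set \<Rightarrow> 'v list) \<Rightarrow> 'v set \<Rightarrow> 'v set \<Rightarrow> int" where
  "incidence_sign ori F Fb =
     (let x = the_elem (Fb - F);
          j = pos (ori Fb) x;
          induced = remove1 x (ori Fb)
      in if even (inversions (ori F) induced) then (-1) ^ j else - ((-1) ^ j))"

definition B_vertices :: "'v set set \<Rightarrow> nat \<Rightarrow> 'v set set" where
  "B_vertices K i = faces_of_dim K i \<union> faces_of_dim K (i + 1)"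

definition B_adj :: "'v set set \<Rightarrow> nat \<Rightarrow> 'v set \<Rightarrow> 'v set \<Rightarrow> bool" where
  "B_adj K i F G \<longleftrightarrow>
     (F \<in> faces_of_dim K i \<and> G \<in> faces_of_dim K (i + 1) \<and> F \<subseteq> G) \<or>
     (G \<in> faces_of_dim K i \<and> F \<in> faces_of_dim K (i + 1) \<and> G \<subseteq> F)"

definition B_sign :: "('v set \<Rightarrow> 'v list) \<Rightarrow> 'v set \<Rightarrow> 'v set \<Rightarrow> int" where
  "B_sign ori F G = (if card F < card G then incidence_sign ori F G else incidence_sign ori G F)"

definition B_cycle :: "'v set set \<Rightarrow> nat \<Rightarrow> 'v set list \<Rightarrow> bool" where
  "B_cycle K i cs \<longleftrightarrow> length cs \<ge> 3 \<and> distinct cs \<and> set cs \<subseteq> B_vertices K i \<and>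
     (\<forall>m < length cs. B_adj K i (cs ! m) (cs ! ((m + 1) mod length cs)))"

definition cycle_sign :: "('v set \<Rightarrow> 'v list) \<Rightarrow> 'v set list \<Rightarrow> int" where
  "cycle_sign ori cs = (\<Prod>m < length cs. B_sign ori (cs ! m) (cs ! ((m + 1) mod length cs)))"

definition B_balanced :: "'v set set \<Rightarrow> ('v set \<Rightarrow> 'v list) \<Rightarrow> nat \<Rightarrow> bool" where
  "B_balanced K ori i \<longleftrightarrow> (\<forall>cs. B_cycle K i cs \<longrightarrow> cycle_sign ori cs = 1)"

end

theory Submission
  imports Defs
begin

text \<open>Every edge of \<open>B_i(K)\<close> joins an \<open>i\<close>-face to an \<open>(i+1)\<close>-face of the same
summand, and the summands \<open>K1\<close> and the relabelled \<open>K2\<close> share only faces of \<open>F1\<close>. A cycle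
that is not contained in one summand must pass through common faces \<open>x \<noteq> y\<close> on both of its
arcs. Since \<open>card F1 \<le> i + 2\<close>, common faces other than \<open>F1\<close> are \<open>i\<close>-faces of \<open>F1\<close>, which is then
an \<open>(i+1)\<close>-face adjacent to both; so either \<open>x\<close> and \<open>y\<close> are adjacent, or the cycle can be
rerouted through \<open>F1\<close>. Either way the cycle splits into two shorter cycles whose signs multiply
to its sign (the extra edges are traversed twice), and induction on the length reduces
balancedness of the wedge to that of the summands. Finally, balancedness does not depend on the
orientation, because reorienting a face multiplies the signs of both cycle edges at it by the
same sign, and it is invariant under the injective relabelling that identifies \<open>F2\<close> with
\<open>F1\<close>.\<close>

section \<open>Inversion counts\<close>

lemma pos_less_length: "x \<in> set xs \<Longrightarrow> pos xs x < length xs"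
  by (induction xs) auto

lemma nth_pos: "x \<in> set xs \<Longrightarrow> xs ! pos xs x = x"
  by (induction xs) auto

lemma pos_nth: "distinct xs \<Longrightarrow> a < length xs \<Longrightarrow> pos xs (xs ! a) = a"
  by (induction xs arbitrary: a) (auto simp: nth_Cons split: nat.split)

lemma pos_eq_iff: "x \<in> set xs \<Longrightarrow> y \<in> set xs \<Longrightarrow> pos xs x = pos xs y \<longleftrightarrow> x = y"
  by (metis nth_pos)

text \<open>Inversions are counted through the unordered pairs that the two lists order
differently; this turns the cocycle law for their parities into a statement about symmetric
differences.\<close>
definition discordant_pairs :: "'v list \<Rightarrow> 'v list \<Rightarrow> 'v set set" where
  "discordant_pairs xs ys = {{u, v} | u v. u \<noteq> v \<and> u \<in> set xs \<and> v \<in> set xs \<and>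
      (pos xs u < pos xs v) \<noteq> (pos ys u < pos ys v)}"

lemma finite_discordant_pairs: "finite (discordant_pairs xs ys)"
proof (rule finite_subset)
  show "discordant_pairs xs ys \<subseteq> Pow (set xs)" unfolding discordant_pairs_def by auto
qed simp

lemma discordant_pairsE:
  assumes "d \<in> discordant_pairs xs ys"
  obtains u v where "d = {u, v}" "u \<noteq> v" "u \<in> set xs" "v \<in> set xs"
  using assms unfolding discordant_pairs_def by blast

lemma doubleton_mem_discordant_pairs_iff:
  assumes "u \<in> set xs" "v \<in> set xs" "u \<noteq> v" "set xs \<subseteq> set ys"
  shows "{u, v} \<in> discordant_pairs xs ys \<longleftrightarrow> (pos xs u < pos xs v) \<noteq> (pos ys u < pos ys v)"
proof -
  have "pos xs u \<noteq> pos xs v" "pos ys u \<noteq> pos ys v"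
    using assms pos_eq_iff by (metis subsetD)+
  then show ?thesis
    using assms unfolding discordant_pairs_def by (auto simp: doubleton_eq_iff)
qed

lemma inversions_eq_card_discordant_pairs:
  assumes "distinct xs" "set xs \<subseteq> set ys"
  shows "inversions xs ys = card (discordant_pairs xs ys)"
proof -
  let ?I = "{(a, b). a < b \<and> b < length xs \<and> pos ys (xs ! a) > pos ys (xs ! b)}"
  let ?h = "\<lambda>(a, b). {xs ! a, xs ! b}"
  have "inj_on ?h ?I"
  proof (rule inj_onI, clarsimp)
    fix a b a' b'
    assume "{xs ! a, xs ! b} = {xs ! a', xs ! b'}" "a < b" "b < length xs" "a' < b'" "b' < length xs"
    then show "a = a' \<and> b = b'"
      using assms(1) by (auto simp: doubleton_eq_iff nth_eq_iff_index_eq)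
  qed
  moreover have "?h ` ?I = discordant_pairs xs ys"
  proof
    show "?h ` ?I \<subseteq> discordant_pairs xs ys"
      using assms by (auto simp: doubleton_mem_discordant_pairs_iff nth_eq_iff_index_eq pos_nth)
  next
    show "discordant_pairs xs ys \<subseteq> ?h ` ?I"
    proof
      fix d assume d: "d \<in> discordant_pairs xs ys"
      then obtain u v where uv: "d = {u, v}" "u \<noteq> v" "u \<in> set xs" "v \<in> set xs"
        by (rule discordant_pairsE)
      with d assms have c: "(pos xs u < pos xs v) \<noteq> (pos ys u < pos ys v)"
        by (simp add: doubleton_mem_discordant_pairs_iff)
      have "pos xs u \<noteq> pos xs v" "pos ys u \<noteq> pos ys v"
        using uv assms pos_eq_iff by (metis subsetD)+
      with c have "(pos xs u, pos xs v) \<in> ?I \<or> (pos xs v, pos xs u) \<in> ?I"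
        using uv by (auto simp: pos_less_length nth_pos)
      moreover have "d = ?h (pos xs u, pos xs v)" "d = ?h (pos xs v, pos xs u)"
        using uv by (auto simp: nth_pos)
      ultimately show "d \<in> ?h ` ?I" by blast
    qed
  qed
  ultimately show ?thesis
    unfolding inversions_def by (metis (no_types, lifting) card_image)
qed

lemma even_card_sym_diff_plus:
  assumes "finite A" "finite B"
  shows "even (card (sym_diff A B) + card A + card B)"
proof -
  have "card (sym_diff A B) = card (A - B) + card (B - A)"
    by (rule card_Un_disjoint) (use assms in auto)
  moreover have "card A = card (A - B) + card (A \<inter> B)"
    using card_Int_Diff[OF assms(1), of B] by simp
  moreover have "card B = card (B - A) + card (A \<inter> B)"
    using card_Int_Diff[OF assms(2), of A] by (simp add: Int_commute)
  ultimately show ?thesis by presburger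
qed

lemma even_inversions_cocycle:
  assumes "distinct xs" "distinct ys" "distinct zs" "set ys = set xs" "set zs = set xs"
  shows "even (inversions xs zs + inversions xs ys + inversions ys zs)"
proof -
  have "discordant_pairs xs zs = sym_diff (discordant_pairs xs ys) (discordant_pairs ys zs)"
  proof (rule set_eqI)
    fix d
    show "d \<in> discordant_pairs xs zs \<longleftrightarrow>
        d \<in> sym_diff (discordant_pairs xs ys) (discordant_pairs ys zs)"
    proof (cases "\<exists>u v. d = {u, v} \<and> u \<noteq> v \<and> u \<in> set xs \<and> v \<in> set xs")
      case True
      then obtain u v where "d = {u, v}" "u \<noteq> v" "u \<in> set xs" "v \<in> set xs" by blast
      with assms show ?thesis by (auto simp: doubleton_mem_discordant_pairs_iff)
    next
      case False
      with assms show ?thesis by (metis UnE Diff_iff discordant_pairsE)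
    qed
  qed
  moreover have "inversions xs zs = card (discordant_pairs xs zs)"
    "inversions xs ys = card (discordant_pairs xs ys)"
    "inversions ys zs = card (discordant_pairs ys zs)"
    using assms by (auto intro: inversions_eq_card_discordant_pairs)
  ultimately show ?thesis
    using even_card_sym_diff_plus[OF finite_discordant_pairs finite_discordant_pairs]
    by (simp add: ac_simps)
qed

lemma pos_remove1:
  "distinct xs \<Longrightarrow> u \<in> set xs \<Longrightarrow> x \<in> set xs \<Longrightarrow> u \<noteq> x \<Longrightarrow>
   pos (remove1 x xs) u = (if pos xs u < pos xs x then pos xs u else pos xs u - 1)"
proof (induction xs)
  case (Cons y ys)
  show ?case
  proof (cases "y = x \<or> y = u")
    case False
    then have "u \<in> set ys" "x \<in> set ys" using Cons.prems by auto
    then have "pos ys u \<noteq> pos ys x" using Cons.prems(4) pos_eq_iff by metis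
    then show ?thesis using Cons.IH \<open>u \<in> set ys\<close> \<open>x \<in> set ys\<close> Cons.prems False by auto
  qed (use Cons.prems in auto)
qed simp

lemma pos_remove1_less_iff:
  assumes "distinct xs" "u \<in> set xs" "v \<in> set xs" "x \<in> set xs" "u \<noteq> x" "v \<noteq> x" "u \<noteq> v"
  shows "pos (remove1 x xs) u < pos (remove1 x xs) v \<longleftrightarrow> pos xs u < pos xs v"
proof -
  have "pos xs u \<noteq> pos xs v" "pos xs u \<noteq> pos xs x" "pos xs v \<noteq> pos xs x"
    using assms pos_eq_iff by metis+
  then show ?thesis using pos_remove1[OF assms(1,2,4,5)] pos_remove1[OF assms(1,3,4,6)] by auto
qed

lemma discordant_pairs_move_to_front:
  assumes "distinct xs" "x \<in> set xs"
  shows "discordant_pairs xs (x # remove1 x xs) = (\<lambda>v. {v, x}) ` (!) xs ` {..<pos xs x}"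
    (is "discordant_pairs xs ?ys = _ ` ?S")
proof (rule set_eqI)
  have set_ys: "set ?ys = set xs" using assms by auto
  fix d show "d \<in> discordant_pairs xs ?ys \<longleftrightarrow> d \<in> (\<lambda>v. {v, x}) ` ?S"
  proof
    assume d: "d \<in> discordant_pairs xs ?ys"
    then obtain u v where uv: "d = {u, v}" "u \<noteq> v" "u \<in> set xs" "v \<in> set xs"
      by (rule discordant_pairsE)
    with d set_ys have c: "(pos xs u < pos xs v) \<noteq> (pos ?ys u < pos ?ys v)"
      by (simp add: doubleton_mem_discordant_pairs_iff)
    have "pos xs u \<noteq> pos xs v" using uv pos_eq_iff by metis
    with c uv have "u = x \<or> v = x"
      using pos_remove1_less_iff[OF assms(1) uv(3,4) assms(2)] by fastforce
    then have "(u = x \<and> pos xs v < pos xs x) \<or> (v = x \<and> pos xs u < pos xs x)"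
      using c uv \<open>pos xs u \<noteq> pos xs v\<close> by auto
    moreover have "w \<in> ?S" if "w \<in> set xs" "pos xs w < pos xs x" for w
      using that by (metis lessThan_iff nth_pos image_eqI)
    ultimately show "d \<in> (\<lambda>v. {v, x}) ` ?S"
      using uv by (auto simp: insert_commute)
  next
    assume "d \<in> (\<lambda>v. {v, x}) ` ?S"
    then obtain a where a: "d = {xs ! a, x}" "a < pos xs x" by auto
    have "pos xs x < length xs" using assms(2) by (rule pos_less_length)
    with a assms have "xs ! a \<in> set xs" "pos xs (xs ! a) < pos xs x"
      by (auto simp: pos_nth)
    moreover from this have "xs ! a \<noteq> x" by auto
    ultimately have "{xs ! a, x} \<in> discordant_pairs xs ?ys"
      using assms set_ys by (subst doubleton_mem_discordant_pairs_iff) auto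
    then show "d \<in> discordant_pairs xs ?ys" using a by simp
  qed
qed

lemma inversions_move_to_front:
  assumes "distinct xs" "x \<in> set xs"
  shows "inversions xs (x # remove1 x xs) = pos xs x"
proof -
  have "inj_on (\<lambda>v. {v, x}) ((!) xs ` {..<pos xs x})"
    by (rule inj_onI) (auto simp: doubleton_eq_iff)
  moreover have "inj_on ((!) xs) {..<pos xs x}"
    using assms pos_less_length[OF assms(2)] by (auto simp: inj_on_def nth_eq_iff_index_eq)
  ultimately have "card (discordant_pairs xs (x # remove1 x xs)) = pos xs x"
    by (simp add: discordant_pairs_move_to_front[OF assms] card_image)
  moreover have "set xs \<subseteq> set (x # remove1 x xs)" using assms by auto
  ultimately show ?thesis using assms(1) by (simp add: inversions_eq_card_discordant_pairs)
qed

lemma inversions_Cons_Cons: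
  assumes "distinct (x # xs)" "distinct (x # ys)" "set ys = set xs"
  shows "inversions (x # xs) (x # ys) = inversions xs ys"
proof -
  have "discordant_pairs (x # xs) (x # ys) = discordant_pairs xs ys"
    using assms unfolding discordant_pairs_def by fastforce
  then show ?thesis using assms by (simp add: inversions_eq_card_discordant_pairs)
qed

section \<open>Incidence signs under reorientation and relabelling\<close>

lemma incidence_sign_eq_power:
  "incidence_sign ori F G = (-1) ^ (pos (ori G) (the_elem (G - F)) +
      inversions (ori F) (remove1 (the_elem (G - F)) (ori G)))"
  by (auto simp: incidence_sign_def Let_def power_add minus_one_power_iff)

definition orientation_change :: "('v set \<Rightarrow> 'v list) \<Rightarrow> ('v set \<Rightarrow> 'v list) \<Rightarrow> 'v set \<Rightarrow> int" where
  "orientation_change o1 o2 F = (-1) ^ inversions (o2 F) (o1 F)"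

lemma orientation_change_square: "orientation_change o1 o2 F * orientation_change o1 o2 F = 1"
  unfolding orientation_change_def by (simp add: power_mult_distrib[symmetric])

lemma incidence_sign_reorient:
  assumes o1: "orientation K o1" and o2: "orientation K o2" and faces: "F \<in> K" "G \<in> K"
    and facet: "F \<subseteq> G" "G - F = {x}"
  shows "incidence_sign o2 F G =
     orientation_change o1 o2 F * orientation_change o1 o2 G * incidence_sign o1 F G"
proof -
  define L1 L2 where "L1 = o1 G" and "L2 = o2 G"
  define R1 R2 where "R1 = remove1 x L1" and "R2 = remove1 x L2"
  have o: "distinct (o1 F)" "set (o1 F) = F" "distinct (o2 F)" "set (o2 F) = F"
    "distinct L1" "set L1 = G" "distinct L2" "set L2 = G"
    using o1 o2 faces unfolding orientation_def L1_def L2_def by auto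
  have x: "the_elem (G - F) = x" "x \<in> G" "x \<notin> F" using facet by auto
  have R: "set R1 = F" "set R2 = F" "distinct R1" "distinct R2"
    unfolding R1_def R2_def using o facet by auto
  have G: "set (x # R1) = G" "set (x # R2) = G" "distinct (x # R1)" "distinct (x # R2)"
    using R x facet by auto
  have "even (inversions (o2 F) R2 + inversions (o2 F) (o1 F) + inversions (o1 F) R2)"
    by (rule even_inversions_cocycle) (use o R in auto)
  moreover have "even (inversions (o1 F) R2 + inversions (o1 F) R1 + inversions R1 R2)"
    by (rule even_inversions_cocycle) (use o R in auto)
  moreover have "even (inversions L2 (x # R2) + inversions L2 L1 + inversions L1 (x # R2))"
    by (rule even_inversions_cocycle) (use o G in auto)
  moreover have "even (inversions L1 (x # R2) + inversions L1 (x # R1) + inversions (x # R1) (x # R2))"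
    by (rule even_inversions_cocycle) (use o G in auto)
  moreover have "inversions L2 (x # R2) = pos L2 x" "inversions L1 (x # R1) = pos L1 x"
    unfolding R1_def R2_def using o x(2) by (auto intro: inversions_move_to_front)
  moreover have "inversions (x # R1) (x # R2) = inversions R1 R2"
    using R x(3) by (auto intro: inversions_Cons_Cons)
  ultimately have "even ((pos L2 x + inversions (o2 F) R2) +
      (inversions (o2 F) (o1 F) + inversions L2 L1 + (pos L1 x + inversions (o1 F) R1)))"
    by presburger
  then have "(-1::int) ^ (pos L2 x + inversions (o2 F) R2) =
      (-1) ^ (inversions (o2 F) (o1 F) + inversions L2 L1 + (pos L1 x + inversions (o1 F) R1))"
    by (auto simp: minus_one_power_iff)
  then show ?thesis
    unfolding incidence_sign_eq_power orientation_change_def x(1) L1_def L2_def R1_def R2_def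
    by (simp add: power_add)
qed

lemma pos_map_inj_on: "inj_on g (insert x (set xs)) \<Longrightarrow> pos (map g xs) (g x) = pos xs x"
proof (induction xs)
  case (Cons a xs)
  have "g a = g x \<longleftrightarrow> a = x" using inj_onD[OF Cons.prems] by auto
  then show ?case using Cons by (auto simp: inj_on_insert insert_commute)
qed simp

lemma remove1_map_inj_on:
  "inj_on g (insert x (set xs)) \<Longrightarrow> remove1 (g x) (map g xs) = map g (remove1 x xs)"
proof (induction xs)
  case (Cons a xs)
  have "g a = g x \<longleftrightarrow> a = x" using inj_onD[OF Cons.prems] by auto
  then show ?case using Cons by (auto simp: inj_on_insert insert_commute)
qed simp

lemma inversions_map_inj_on:
  assumes "inj_on g (set xs \<union> set ys)"
  shows "inversions (map g xs) (map g ys) = inversions xs ys"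
proof -
  have "pos (map g ys) (g (xs ! a)) = pos ys (xs ! a)" if "a < length xs" for a
    using that by (intro pos_map_inj_on inj_on_subset[OF assms]) auto
  then have "{(a, b). a < b \<and> b < length (map g xs) \<and>
        pos (map g ys) (map g xs ! a) > pos (map g ys) (map g xs ! b)} =
      {(a, b). a < b \<and> b < length xs \<and> pos ys (xs ! a) > pos ys (xs ! b)}"
    by auto
  then show ?thesis unfolding inversions_def by simp
qed

lemma incidence_sign_image:
  assumes inj: "inj_on g S" and "set (o' F) \<subseteq> S" "set (o' G) \<subseteq> S" "G \<subseteq> S"
    and facet: "F \<subseteq> G" "G - F = {x}"
    and "ori (g ` F) = map g (o' F)" "ori (g ` G) = map g (o' G)"
  shows "incidence_sign ori (g ` F) (g ` G) = incidence_sign o' F G"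
proof -
  have "g ` G - g ` F = g ` (G - F)"
    using assms by (metis Diff_subset inj_on_image_set_diff subset_trans)
  then have "the_elem (g ` G - g ` F) = g x" using facet by simp
  moreover have "x \<in> S" using assms by auto
  then have "inj_on g (insert x (set (o' G)))" "inj_on g (set (o' F) \<union> set (remove1 x (o' G)))"
    using assms set_remove1_subset[of x "o' G"] by (meson Un_least inj_on_subset insert_subset subset_trans)+
  ultimately show ?thesis
    using facet assms(7,8) unfolding incidence_sign_eq_power
    by (simp add: pos_map_inj_on remove1_map_inj_on inversions_map_inj_on)
qed

section \<open>Cycles of the signed graph as lists\<close>

definition cycle_edges :: "'a list \<Rightarrow> ('a \<times> 'a) list" where
  "cycle_edges cs = zip cs (rotate1 cs)"

definition path_edges :: "'a list \<Rightarrow> ('a \<times> 'a) list" where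
  "path_edges xs = zip xs (tl xs)"

lemma prod_list_map_conv_prod_nth: "prod_list (map g xs) = (\<Prod>m<length xs. g (xs ! m))"
  by (induction xs) (simp_all add: prod.lessThan_Suc_shift del: prod.lessThan_Suc)

lemma set_cycle_edges:
  "set (cycle_edges cs) = {(cs ! m, cs ! ((m + 1) mod length cs)) | m. m < length cs}"
  unfolding cycle_edges_def by (auto simp: set_zip nth_rotate1)

lemma B_cycle_iff_cycle_edges:
  "B_cycle K i cs \<longleftrightarrow> 3 \<le> length cs \<and> distinct cs \<and> set cs \<subseteq> B_vertices K i \<and>
     (\<forall>(u, v) \<in> set (cycle_edges cs). B_adj K i u v)"
  unfolding B_cycle_def set_cycle_edges by auto

lemma B_cycle_faces: "B_cycle K i cs \<Longrightarrow> set cs \<subseteq> K"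
  unfolding B_cycle_def B_vertices_def faces_of_dim_def by auto

lemma cycle_sign_eq_prod_cycle_edges:
  "cycle_sign ori cs = (\<Prod>(u, v) \<leftarrow> cycle_edges cs. B_sign ori u v)"
  unfolding cycle_sign_def prod_list_map_conv_prod_nth cycle_edges_def by (simp add: nth_rotate1)

lemma zip_rotate1: "length xs = length ys \<Longrightarrow> zip (rotate1 xs) (rotate1 ys) = rotate1 (zip xs ys)"
  by (cases xs; cases ys) auto

lemma cycle_edges_rotate1: "cycle_edges (rotate1 cs) = rotate1 (cycle_edges cs)"
  unfolding cycle_edges_def by (simp add: zip_rotate1)

lemma cycle_edges_map: "cycle_edges (map h cs) = map (\<lambda>(u, v). (h u, h v)) (cycle_edges cs)"
  unfolding cycle_edges_def rotate1_map zip_map_map by (simp add: case_prod_beta)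

lemma set_cycle_edges_subset: "set (cycle_edges cs) \<subseteq> set cs \<times> set cs"
  unfolding cycle_edges_def by (auto dest: set_zip_leftD set_zip_rightD)

lemma prod_list_rotate1: "prod_list (rotate1 xs) = prod_list (xs :: 'a :: comm_monoid_mult list)"
  by (cases xs) (auto simp: mult.commute)

lemma B_cycle_rotate: "B_cycle K i (rotate n cs) \<longleftrightarrow> B_cycle K i cs"
  by (induction n) (simp_all add: B_cycle_iff_cycle_edges cycle_edges_rotate1)

lemma cycle_sign_rotate: "cycle_sign ori (rotate n cs) = cycle_sign ori cs"
  by (induction n) (simp_all add: cycle_sign_eq_prod_cycle_edges cycle_edges_rotate1
      prod_list_rotate1 rotate1_map[symmetric])

lemma zip_snoc_left: "length ys = length xs \<Longrightarrow> zip (xs @ [y]) ys = zip xs ys"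
  by (induction xs arbitrary: ys) (auto simp: length_Suc_conv)

lemma cycle_edges_eq_path_edges: "cycle_edges (x # xs) = path_edges (x # xs @ [x])"
  unfolding cycle_edges_def path_edges_def
  by (simp add: zip_snoc_left[of "xs @ [x]" "x # xs", simplified])

lemma path_edges_Cons_Cons: "path_edges (a # b # zs) = (a, b) # path_edges (b # zs)"
  unfolding path_edges_def by simp

lemma path_edges_append: "path_edges (xs @ y # ys) = path_edges (xs @ [y]) @ path_edges (y # ys)"
  by (induction xs rule: induct_list012) (simp_all add: path_edges_def)

lemma cycle_edges_split:
  "cycle_edges (x # P1 @ y # P2) = path_edges (x # P1 @ [y]) @ path_edges (y # P2 @ [x])"
  using path_edges_append[of "x # P1" y "P2 @ [x]"] by (simp add: cycle_edges_eq_path_edges)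

lemma cycle_edges_close: "cycle_edges (x # P @ [y]) = path_edges (x # P @ [y]) @ [(y, x)]"
  using path_edges_append[of "x # P" y "[x]"] by (simp add: cycle_edges_eq_path_edges path_edges_def)

lemma cycle_edges_close_via: "cycle_edges (x # P @ [y, w]) = path_edges (x # P @ [y]) @ [(y, w), (w, x)]"
  using path_edges_append[of "x # P" y "[w, x]"] by (simp add: cycle_edges_eq_path_edges path_edges_def)

lemma B_adj_commute: "B_adj K i u v \<longleftrightarrow> B_adj K i v u"
  unfolding B_adj_def by auto

lemma B_adj_card_neq: "B_adj K i u v \<Longrightarrow> card u \<noteq> card v"
  unfolding B_adj_def faces_of_dim_def by auto

lemma B_sign_commute: "card u \<noteq> card v \<Longrightarrow> B_sign ori u v = B_sign ori v u"
  unfolding B_sign_def by auto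

lemma B_sign_square: "B_sign ori u v * B_sign ori u v = 1"
  unfolding B_sign_def incidence_sign_eq_power by (simp add: power_mult_distrib[symmetric])

lemma B_sign_back_and_forth: "B_adj K i u v \<Longrightarrow> B_sign ori u v * B_sign ori v u = 1"
  using B_sign_square B_sign_commute B_adj_card_neq by metis

lemma B_cycle_split_at_chord:
  assumes cyc: "B_cycle K i (x # P1 @ y # P2)" and "P1 \<noteq> []" "P2 \<noteq> []"
    and chord: "B_adj K i x y"
  shows "B_cycle K i (x # P1 @ [y])" "B_cycle K i (y # P2 @ [x])"
    and "cycle_sign ori (x # P1 @ [y]) * cycle_sign ori (y # P2 @ [x]) =
      cycle_sign ori (x # P1 @ y # P2)"
proof -
  from cyc have "distinct (x # P1 @ y # P2)" "set (x # P1 @ y # P2) \<subseteq> B_vertices K i"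
    "\<forall>(u, v) \<in> set (cycle_edges (x # P1 @ y # P2)). B_adj K i u v"
    unfolding B_cycle_iff_cycle_edges by auto
  moreover have "3 \<le> length (x # P1 @ [y])" "3 \<le> length (y # P2 @ [x])"
    using assms(2,3) by (auto simp: neq_Nil_conv)
  ultimately show "B_cycle K i (x # P1 @ [y])" "B_cycle K i (y # P2 @ [x])"
    unfolding B_cycle_iff_cycle_edges cycle_edges_close[of x P1 y] cycle_edges_close[of y P2 x]
      cycle_edges_split[of x P1 y P2]
    using chord by (auto simp: B_adj_commute)
  have "cycle_sign ori (x # P1 @ [y]) * cycle_sign ori (y # P2 @ [x]) =
      cycle_sign ori (x # P1 @ y # P2) * (B_sign ori y x * B_sign ori x y)"
    unfolding cycle_sign_eq_prod_cycle_edges cycle_edges_close[of x P1 y] cycle_edges_close[of y P2 x]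
      cycle_edges_split[of x P1 y P2]
    by (simp add: ac_simps)
  then show "cycle_sign ori (x # P1 @ [y]) * cycle_sign ori (y # P2 @ [x]) =
      cycle_sign ori (x # P1 @ y # P2)"
    using B_sign_back_and_forth[OF chord] by (simp add: mult.commute)
qed

lemma B_cycle_split_via_vertex:
  assumes cyc: "B_cycle K i (x # P1 @ y # P2)" and "length P1 \<ge> 2" "length P2 \<ge> 2"
    and w: "w \<notin> set (x # P1 @ y # P2)" "w \<in> B_vertices K i" "B_adj K i x w" "B_adj K i y w"
  shows "B_cycle K i (x # P1 @ [y, w])" "B_cycle K i (y # P2 @ [x, w])"
    and "cycle_sign ori (x # P1 @ [y, w]) * cycle_sign ori (y # P2 @ [x, w]) =
      cycle_sign ori (x # P1 @ y # P2)"
proof -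
  from cyc have "distinct (x # P1 @ y # P2)" "set (x # P1 @ y # P2) \<subseteq> B_vertices K i"
    "\<forall>(u, v) \<in> set (cycle_edges (x # P1 @ y # P2)). B_adj K i u v"
    unfolding B_cycle_iff_cycle_edges by auto
  then show "B_cycle K i (x # P1 @ [y, w])" "B_cycle K i (y # P2 @ [x, w])"
    unfolding B_cycle_iff_cycle_edges cycle_edges_close_via[of x P1 y] cycle_edges_close_via[of y P2 x]
      cycle_edges_split[of x P1 y P2]
    using assms(2-) by (auto simp: B_adj_commute)
  have "cycle_sign ori (x # P1 @ [y, w]) * cycle_sign ori (y # P2 @ [x, w]) =
      cycle_sign ori (x # P1 @ y # P2) *
      ((B_sign ori y w * B_sign ori w y) * (B_sign ori x w * B_sign ori w x))"
    unfolding cycle_sign_eq_prod_cycle_edges cycle_edges_close_via[of x P1 y] cycle_edges_close_via[of y P2 x]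
      cycle_edges_split[of x P1 y P2]
    by (simp add: ac_simps)
  then show "cycle_sign ori (x # P1 @ [y, w]) * cycle_sign ori (y # P2 @ [x, w]) =
      cycle_sign ori (x # P1 @ y # P2)"
    using B_sign_back_and_forth[OF w(3)] B_sign_back_and_forth[OF w(4)] by simp
qed

section \<open>Independence of the orientation and of the vertex names\<close>

lemma B_adj_facet:
  assumes "B_adj K i F G" "card F < card G"
  obtains x where "F \<in> K" "G \<in> K" "F \<subseteq> G" "G - F = {x}"
proof -
  have F: "F \<in> K" "G \<in> K" "F \<subseteq> G" "card G = Suc (card F)"
    using assms unfolding B_adj_def faces_of_dim_def by auto
  then have "finite G" by (metis card.infinite nat.distinct(1))
  then have "card (G - F) = 1" using F by (simp add: card_Diff_subset finite_subset)
  with F that show thesis by (meson card_1_singletonE)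
qed

lemma B_sign_reorient:
  assumes "orientation K o1" "orientation K o2" "B_adj K i u v"
  shows "B_sign o2 u v = orientation_change o1 o2 u * orientation_change o1 o2 v * B_sign o1 u v"
proof (cases "card u < card v")
  case True
  with assms(3) obtain x where "u \<in> K" "v \<in> K" "u \<subseteq> v" "v - u = {x}" by (rule B_adj_facet)
  with True show ?thesis unfolding B_sign_def using incidence_sign_reorient[OF assms(1,2)] by simp
next
  case False
  with assms(3) have "card v < card u" using B_adj_card_neq by fastforce
  moreover have "B_adj K i v u" using assms(3) B_adj_commute by blast
  ultimately obtain x where "v \<in> K" "u \<in> K" "v \<subseteq> u" "u - v = {x}"
    by (meson B_adj_facet)
  with \<open>card v < card u\<close> show ?thesis
    unfolding B_sign_def using incidence_sign_reorient[OF assms(1,2)] by (simp add: ac_simps)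
qed

lemma prod_list_map_mult:
  "(\<Prod>x\<leftarrow>xs. f x * g x) = (\<Prod>x\<leftarrow>xs. f x) * (\<Prod>x\<leftarrow>xs. g x :: 'a :: comm_monoid_mult)"
  by (induction xs) (simp_all add: ac_simps)

text \<open>Along a cycle every face occurs once as a head and once as a tail, so the
orientation changes cancel in pairs.\<close>
lemma cycle_sign_reorient:
  assumes "orientation K o1" "orientation K o2" "B_cycle K i cs"
  shows "cycle_sign o2 cs = cycle_sign o1 cs"
proof -
  let ?c = "orientation_change o1 o2"
  let ?E = "cycle_edges cs"
  have "(\<Prod>(u, v) \<leftarrow> ?E. B_sign o2 u v) = (\<Prod>(u, v) \<leftarrow> ?E. ?c u * (?c v * B_sign o1 u v))"
    using assms(3) B_sign_reorient[OF assms(1,2)] unfolding B_cycle_iff_cycle_edges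
    by (intro arg_cong[where f = prod_list] map_cong) auto
  also have "\<dots> = (\<Prod>e \<leftarrow> ?E. ?c (fst e)) * (\<Prod>e \<leftarrow> ?E. ?c (snd e)) * cycle_sign o1 cs"
    unfolding cycle_sign_eq_prod_cycle_edges case_prod_beta prod_list_map_mult by (simp add: ac_simps)
  also have "(\<Prod>e \<leftarrow> ?E. ?c (snd e)) = (\<Prod>e \<leftarrow> ?E. ?c (fst e))"
    by (simp add: cycle_edges_def map_snd_zip map_fst_zip rotate1_map[symmetric] prod_list_rotate1
        flip: map_map[unfolded comp_def])
  also have "(\<Prod>e \<leftarrow> ?E. ?c (fst e)) * (\<Prod>e \<leftarrow> ?E. ?c (fst e)) = 1"
    by (simp add: orientation_change_square map_replicate_const flip: prod_list_map_mult)
  finally show ?thesis by (simp add: cycle_sign_eq_prod_cycle_edges)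
qed

lemma B_balanced_reorient:
  assumes "orientation K o1" "orientation K o2"
  shows "B_balanced K o1 i \<longleftrightarrow> B_balanced K o2 i"
  using cycle_sign_reorient[OF assms] unfolding B_balanced_def by metis

locale injective_relabelling =
  fixes K :: "'v set set" and g :: "'v \<Rightarrow> 'v" and ori :: "'v set \<Rightarrow> 'v list"
  assumes inj: "inj_on g (\<Union>K)"
    and ori: "orientation ((`) g ` K) ori"
begin

definition pullback :: "'v set \<Rightarrow> 'v list" where
  "pullback H = map (inv_into (\<Union>K) g) (ori (g ` H))"

lemma ori_image: "H \<in> K \<Longrightarrow> distinct (ori (g ` H)) \<and> set (ori (g ` H)) = g ` H"
  using ori unfolding orientation_def by auto

lemma map_pullback: "H \<in> K \<Longrightarrow> map g (pullback H) = ori (g ` H)"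
  unfolding pullback_def map_map comp_def
  by (rule map_idI) (use ori_image in \<open>auto intro!: f_inv_into_f\<close>)

lemma orientation_pullback: "orientation K pullback"
  unfolding orientation_def
proof
  fix H assume H: "H \<in> K"
  have "set (ori (g ` H)) \<subseteq> g ` \<Union>K" using ori_image[OF H] H by auto
  then show "distinct (pullback H) \<and> set (pullback H) = H"
    unfolding pullback_def using ori_image[OF H] H inj inj_on_inv_into
    by (simp add: distinct_map Union_upper)
qed

lemma image_subset_image_iff: "F \<in> K \<Longrightarrow> G \<in> K \<Longrightarrow> g ` F \<subseteq> g ` G \<longleftrightarrow> F \<subseteq> G"
  using inj by (metis Union_upper image_mono inv_into_image_cancel)

lemma card_image_face: "H \<in> K \<Longrightarrow> card (g ` H) = card H"
  using inj by (meson Union_upper card_image inj_on_subset)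

lemma image_mem_faces_of_dim_iff:
  "H \<in> K \<Longrightarrow> g ` H \<in> faces_of_dim ((`) g ` K) j \<longleftrightarrow> H \<in> faces_of_dim K j"
  unfolding faces_of_dim_def using card_image_face by auto

lemma B_adj_image_iff:
  "F \<in> K \<Longrightarrow> G \<in> K \<Longrightarrow> B_adj ((`) g ` K) i (g ` F) (g ` G) \<longleftrightarrow> B_adj K i F G"
  unfolding B_adj_def by (simp add: image_mem_faces_of_dim_iff image_subset_image_iff)

lemma B_sign_image: "B_adj K i F G \<Longrightarrow> B_sign ori (g ` F) (g ` G) = B_sign pullback F G"
proof -
  have facet: "incidence_sign ori (g ` F) (g ` G) = incidence_sign pullback F G"
    if "B_adj K i F G" "card F < card G" for F G
  proof -
    from that obtain x where "F \<in> K" "G \<in> K" "F \<subseteq> G" "G - F = {x}" by (rule B_adj_facet)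
    then show ?thesis
      using orientation_pullback unfolding orientation_def
      by (intro incidence_sign_image[OF inj]) (auto simp: map_pullback)
  qed
  assume adj: "B_adj K i F G"
  then have "card F < card G \<or> card G < card F" using B_adj_card_neq by fastforce
  then show ?thesis
    using facet adj B_adj_commute[of K i F G] card_image_face B_adj_def faces_of_dim_def
    unfolding B_sign_def by (metis (no_types, lifting) mem_Collect_eq)
qed

lemma inj_on_image_faces: "inj_on ((`) g) K"
  using inj by (meson Union_upper inj_onI inj_on_image_eq_iff)

lemma B_cycle_map_image_iff:
  assumes "set cs \<subseteq> K"
  shows "B_cycle ((`) g ` K) i (map ((`) g) cs) \<longleftrightarrow> B_cycle K i cs"
proof -
  have "distinct (map ((`) g) cs) \<longleftrightarrow> distinct cs"
    using assms inj_on_image_faces by (simp add: distinct_map inj_on_subset)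
  moreover have "\<forall>H \<in> set cs. g ` H \<in> B_vertices ((`) g ` K) i \<longleftrightarrow> H \<in> B_vertices K i"
    using assms image_mem_faces_of_dim_iff unfolding B_vertices_def by blast
  then have "set (map ((`) g) cs) \<subseteq> B_vertices ((`) g ` K) i \<longleftrightarrow> set cs \<subseteq> B_vertices K i"
    by auto
  moreover have "set (cycle_edges cs) \<subseteq> K \<times> K"
    using assms set_cycle_edges_subset by blast
  then have "(\<forall>(u, v) \<in> set (cycle_edges (map ((`) g) cs)). B_adj ((`) g ` K) i u v) \<longleftrightarrow>
      (\<forall>(u, v) \<in> set (cycle_edges cs). B_adj K i u v)"
    unfolding cycle_edges_map using B_adj_image_iff by fastforce
  ultimately show ?thesis unfolding B_cycle_iff_cycle_edges by simp
qed

lemma cycle_sign_map_image: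
  assumes "B_cycle K i cs"
  shows "cycle_sign ori (map ((`) g) cs) = cycle_sign pullback cs"
  unfolding cycle_sign_eq_prod_cycle_edges cycle_edges_map map_map
proof (intro arg_cong[where f = prod_list] map_cong refl)
  fix e assume "e \<in> set (cycle_edges cs)"
  with assms show "((\<lambda>(u, v). B_sign ori u v) \<circ> (\<lambda>(u, v). (g ` u, g ` v))) e =
      (\<lambda>(u, v). B_sign pullback u v) e"
    unfolding B_cycle_iff_cycle_edges by (cases e) (auto simp: B_sign_image)
qed

lemma B_balanced_image_iff_pullback:
  "B_balanced ((`) g ` K) ori i \<longleftrightarrow> B_balanced K pullback i"
  unfolding B_balanced_def
proof safe
  fix cs assume "\<forall>cs. B_cycle ((`) g ` K) i cs \<longrightarrow> cycle_sign ori cs = 1" "B_cycle K i cs"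
  then show "cycle_sign pullback cs = 1"
    using B_cycle_map_image_iff[OF B_cycle_faces] cycle_sign_map_image by metis
next
  fix cs' assume bal: "\<forall>cs. B_cycle K i cs \<longrightarrow> cycle_sign pullback cs = 1"
    and cyc: "B_cycle ((`) g ` K) i cs'"
  define cs where "cs = map (inv_into K ((`) g)) cs'"
  have "set cs' \<subseteq> (`) g ` K" using cyc by (rule B_cycle_faces)
  then have "cs' = map ((`) g) cs" "set cs \<subseteq> K"
    unfolding cs_def by (auto simp: f_inv_into_f inv_into_into intro!: map_idI[symmetric])
  with cyc bal show "cycle_sign ori cs' = 1"
    using B_cycle_map_image_iff cycle_sign_map_image by metis
qed

end

lemma B_balanced_image_iff:
  fixes g :: "'v \<Rightarrow> 'v"
  assumes "inj_on g (\<Union>K)" "orientation ((`) g ` K) ori" "orientation K ori'"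
  shows "B_balanced ((`) g ` K) ori i \<longleftrightarrow> B_balanced K ori' i"
proof -
  interpret injective_relabelling K g ori using assms(1,2) by unfold_locales
  show ?thesis
    using B_balanced_image_iff_pullback B_balanced_reorient[OF orientation_pullback assms(3)] by simp
qed

section \<open>Gluing two complexes along a face\<close>

definition down_closed :: "'v set set \<Rightarrow> bool" where
  "down_closed A \<longleftrightarrow> (\<forall>G\<in>A. \<forall>H. H \<subseteq> G \<and> H \<noteq> {} \<longrightarrow> H \<in> A)"

lemma down_closed_mem: "down_closed A \<Longrightarrow> G \<in> A \<Longrightarrow> H \<subseteq> G \<Longrightarrow> card H = Suc j \<Longrightarrow> H \<in> A"
  unfolding down_closed_def by (metis card.empty nat.distinct(1))

lemma B_adj_mem: "B_adj A i u v \<Longrightarrow> u \<in> A \<and> v \<in> A"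
  unfolding B_adj_def faces_of_dim_def by auto

lemma B_adj_mono: "A \<subseteq> K \<Longrightarrow> B_adj A i u v \<Longrightarrow> B_adj K i u v"
  unfolding B_adj_def faces_of_dim_def by auto

lemma B_cycle_mono: "A \<subseteq> K \<Longrightarrow> B_cycle A i cs \<Longrightarrow> B_cycle K i cs"
  unfolding B_cycle_def B_vertices_def faces_of_dim_def using B_adj_mono by blast

lemma B_adj_restrict: "B_adj K i u v \<Longrightarrow> u \<in> A \<Longrightarrow> v \<in> A \<Longrightarrow> B_adj A i u v"
  unfolding B_adj_def faces_of_dim_def by auto

lemma B_cycle_restrict:
  assumes "B_cycle K i cs" "set cs \<subseteq> A"
  shows "B_cycle A i cs"
proof -
  have "set cs \<subseteq> B_vertices A i"
    using assms unfolding B_cycle_def B_vertices_def faces_of_dim_def by auto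
  moreover have "B_adj A i u v" if e: "(u, v) \<in> set (cycle_edges cs)" for u v
  proof (rule B_adj_restrict)
    show "B_adj K i u v" using assms(1) e unfolding B_cycle_iff_cycle_edges by blast
    show "u \<in> A" "v \<in> A" using assms(2) e set_cycle_edges_subset by blast+
  qed
  ultimately show ?thesis
    using assms(1) unfolding B_cycle_iff_cycle_edges by blast
qed

lemma path_crosses_common_face:
  assumes split: "\<And>u v. B_adj K i u v \<Longrightarrow> B_adj A i u v \<or> B_adj B i u v"
    and path: "\<forall>(u, v) \<in> set (path_edges (a # U @ [b])). B_adj K i u v"
    and "a \<in> A" "a \<notin> B" "b \<notin> A"
  shows "\<exists>z\<in>set U. z \<in> A \<inter> B"
  using path assms(3-)
proof (induction U arbitrary: a)
  case Nil
  then have "B_adj K i a b" by (simp add: path_edges_def)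
  then show ?case using split B_adj_mem Nil.prems by blast
next
  case (Cons z U)
  then have "B_adj K i a z" by (simp add: path_edges_Cons_Cons)
  then have "z \<in> A" using split B_adj_mem Cons.prems by blast
  then show ?case using Cons.IH[of z] Cons.prems by (auto simp: path_edges_Cons_Cons)
qed

locale gluing =
  fixes K A B :: "'v set set" and F :: "'v set" and i :: nat
  assumes K_eq: "K = A \<union> B" and down_closed_A: "down_closed A" and down_closed_B: "down_closed B"
    and F_mem: "F \<in> A" "F \<in> B" and finite_F: "finite F"
    and common_faces: "\<And>G. G \<in> A \<Longrightarrow> G \<in> B \<Longrightarrow> G \<subseteq> F"
    and card_F: "card F \<le> i + 2"
begin

lemma B_adj_cases:
  assumes "B_adj K i u v"
  shows "B_adj A i u v \<or> B_adj B i u v"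
proof -
  have "u \<in> A \<and> v \<in> A \<or> u \<in> B \<and> v \<in> B"
    using assms down_closed_mem[OF down_closed_A] down_closed_mem[OF down_closed_B]
    unfolding B_adj_def faces_of_dim_def K_eq by auto
  then show ?thesis using assms B_adj_restrict by blast
qed

text \<open>This is where \<open>k \<le> i + 1\<close> enters: a common face other than \<open>F\<close> is a proper
face of \<open>F\<close>, which has room only for one more vertex.\<close>
lemma common_face_below_F:
  assumes "v \<in> B_vertices K i" "v \<in> A" "v \<in> B" "v \<noteq> F"
  shows "card v = i + 1" "card F = i + 2" "B_adj K i v F"
proof -
  have sub: "v \<subset> F" using common_faces assms by auto
  then have "card v < card F" using finite_F by (rule psubset_card_mono[rotated])
  moreover have "card v = i + 1 \<or> card v = i + 2"
    using assms(1) unfolding B_vertices_def faces_of_dim_def by auto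
  ultimately show "card v = i + 1" "card F = i + 2" using card_F by auto
  then show "B_adj K i v F"
    using sub assms F_mem unfolding B_adj_def faces_of_dim_def K_eq B_vertices_def by auto
qed

lemma F_only_common_coface:
  assumes "x \<in> B_vertices K i" "y \<in> B_vertices K i" "x \<in> A \<inter> B" "y \<in> A \<inter> B"
    and "x \<noteq> F" "y \<noteq> F" "x \<noteq> y" "B_adj K i x c" "B_adj K i y c"
  shows "c = F"
proof -
  have x: "card x = i + 1" "card F = i + 2" and y: "card y = i + 1"
    using common_face_below_F assms by auto
  then have c: "x \<subseteq> c" "y \<subseteq> c" "card c = i + 2"
    using assms(8,9) unfolding B_adj_def faces_of_dim_def by auto
  have "x \<subseteq> F" "y \<subseteq> F" using common_faces assms(3,4) by auto
  have fin: "finite x" "finite c" using x c by (simp_all add: card_ge_0_finite)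
  have "\<not> y \<subseteq> x"
    using assms(7) x y fin by (metis card_subset_eq)
  then have "card x < card (x \<union> y)"
    using fin \<open>x \<subseteq> F\<close> \<open>y \<subseteq> F\<close> finite_F by (intro psubset_card_mono) (auto intro: finite_subset)
  then have "card (x \<union> y) = card F" "card (x \<union> y) = card c"
    using card_mono[OF finite_F, of "x \<union> y"] card_mono[OF fin(2), of "x \<union> y"]
      \<open>x \<subseteq> F\<close> \<open>y \<subseteq> F\<close> c x by auto
  then show ?thesis
    using card_subset_eq[OF finite_F, of "x \<union> y"] card_subset_eq[OF fin(2), of "x \<union> y"]
      \<open>x \<subseteq> F\<close> \<open>y \<subseteq> F\<close> c by auto
qed

text \<open>A single face between \<open>x\<close> and \<open>y\<close> would be a common coface of both, i.e. \<open>F\<close>.\<close>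
lemma path_between_common_faces_long:
  assumes "x \<in> B_vertices K i" "y \<in> B_vertices K i" "x \<in> A \<inter> B" "y \<in> A \<inter> B"
    and "x \<noteq> F" "y \<noteq> F" "x \<noteq> y"
    and path: "\<forall>(u, v) \<in> set (path_edges (x # P @ [y])). B_adj K i u v"
    and b: "b \<in> set P" "b \<noteq> F"
  shows "length P \<ge> 2"
proof (rule ccontr)
  assume "\<not> ?thesis"
  with b have "P = [b]" by (cases P) (auto simp: numeral_2_eq_2 Suc_le_eq)
  with path have "B_adj K i x b" "B_adj K i y b" by (auto simp: path_edges_def B_adj_commute)
  then show False using F_only_common_coface assms(1-7) b(2) by blast
qed

lemma split_at_common_faces:
  assumes cyc: "B_cycle K i (x # P1 @ y # P2)"
    and xy: "x \<in> A \<inter> B" "y \<in> A \<inter> B"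
    and b: "b \<in> set P1" "b \<notin> A" and a: "a \<in> set P2" "a \<notin> B"
    and through_F: "F \<in> set (x # P1 @ y # P2) \<Longrightarrow> x = F \<or> y = F"
  shows "\<exists>c1 c2. B_cycle K i c1 \<and> B_cycle K i c2 \<and>
    length c1 < length (x # P1 @ y # P2) \<and> length c2 < length (x # P1 @ y # P2) \<and>
    cycle_sign ori c1 * cycle_sign ori c2 = cycle_sign ori (x # P1 @ y # P2)"
proof -
  from cyc have "x \<noteq> y" "x \<in> B_vertices K i" "y \<in> B_vertices K i"
    unfolding B_cycle_def by auto
  have ne: "P1 \<noteq> []" "P2 \<noteq> []" using a b by auto
  show ?thesis
  proof (cases "x = F \<or> y = F")
    case True
    then have "B_adj K i x y"
      using common_face_below_F \<open>x \<noteq> y\<close> xy \<open>x \<in> B_vertices K i\<close> \<open>y \<in> B_vertices K i\<close>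
      by (metis IntD1 IntD2 B_adj_commute)
    from B_cycle_split_at_chord[OF cyc ne this] ne show ?thesis
      by (intro exI[of _ "x # P1 @ [y]"] exI[of _ "y # P2 @ [x]"] conjI) (auto simp: neq_Nil_conv)
  next
    case False
    with through_F have F_off: "F \<notin> set (x # P1 @ y # P2)" by blast
    have adj_F: "B_adj K i x F" "B_adj K i y F" "F \<in> B_vertices K i"
      using common_face_below_F False xy \<open>x \<in> B_vertices K i\<close> \<open>y \<in> B_vertices K i\<close> F_mem
      unfolding B_vertices_def faces_of_dim_def K_eq by auto
    have "\<forall>(u, v) \<in> set (cycle_edges (x # P1 @ y # P2)). B_adj K i u v"
      using cyc unfolding B_cycle_iff_cycle_edges by blast
    then have "length P1 \<ge> 2" "length P2 \<ge> 2"
      using path_between_common_faces_long[of x y P1 b] path_between_common_faces_long[of y x P2 a]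
        False xy a b F_mem \<open>x \<noteq> y\<close> \<open>x \<in> B_vertices K i\<close> \<open>y \<in> B_vertices K i\<close>
      unfolding cycle_edges_split by auto
    then show ?thesis
      using B_cycle_split_via_vertex[OF cyc _ _ F_off adj_F(3,1,2)]
      by (intro exI[of _ "x # P1 @ [y, F]"] exI[of _ "y # P2 @ [x, F]"] conjI) auto
  qed
qed

lemma mixed_cycle_rotation:
  assumes cyc: "B_cycle K i cs" and a: "a \<in> set cs" "a \<notin> B" and b: "b \<in> set cs" "b \<notin> A"
  obtains n x P1 y P2 where "rotate n cs = x # P1 @ y # P2" "x \<in> A \<inter> B" "y \<in> A \<inter> B"
    "b \<in> set P1" "a \<in> set P2" "F \<in> set cs \<Longrightarrow> x = F \<or> y = F"
proof -
  have "a \<in> A" using a B_cycle_faces[OF cyc] K_eq by auto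
  obtain L1 L2 where L: "cs = L1 @ a # L2" using a(1) by (meson split_list)
  with b \<open>a \<in> A\<close> have "b \<in> set (L2 @ L1)" by auto
  then obtain U V where UV: "L2 @ L1 = U @ b # V" by (meson split_list)
  have rot0: "rotate (length L1) cs = a # U @ b # V"
    using rotate_append[of L1 "a # L2"] UV unfolding L by simp
  then have "B_cycle K i (a # U @ b # V)" using cyc B_cycle_rotate by metis
  then have edges: "\<forall>(u, v) \<in> set (path_edges (a # U @ [b])). B_adj K i u v"
    "\<forall>(u, v) \<in> set (path_edges (b # V @ [a])). B_adj K i u v"
    unfolding B_cycle_iff_cycle_edges cycle_edges_split by auto
  have "b \<in> B" using b B_cycle_faces[OF cyc] K_eq by auto
  obtain x0 where x0: "x0 \<in> set U" "x0 \<in> A \<inter> B"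
    using path_crosses_common_face[OF B_adj_cases edges(1) \<open>a \<in> A\<close> a(2) b(2)] by blast
  obtain y0 where y0: "y0 \<in> set V" "y0 \<in> A \<inter> B"
    using path_crosses_common_face[of K i B A, OF _ edges(2) \<open>b \<in> B\<close> b(2) a(2)] B_adj_cases
    by blast
  obtain x y where xy: "x \<in> set U" "y \<in> set V" "x \<in> A \<inter> B" "y \<in> A \<inter> B"
    and through_F: "F \<in> set cs \<Longrightarrow> x = F \<or> y = F"
  proof (cases "F \<in> set U")
    case True then show ?thesis using that y0 F_mem by blast
  next
    case False
    moreover have "F \<in> set cs \<Longrightarrow> F \<in> set (a # U @ b # V)" by (metis rot0 set_rotate)
    ultimately show ?thesis using that x0 y0 a(2) b(2) F_mem by auto
  qed
  obtain U1 U2 V1 V2 where "U = U1 @ x # U2" "V = V1 @ y # V2"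
    using xy(1,2) by (meson split_list)
  then have "rotate (length (a # U1)) (a # U @ b # V) = x # (U2 @ b # V1) @ y # (V2 @ a # U1)"
    using rotate_append[of "a # U1" "x # (U2 @ b # V1) @ y # V2"] by simp
  with rot0 have "rotate (length (a # U1) + length L1) cs = x # (U2 @ b # V1) @ y # (V2 @ a # U1)"
    unfolding rotate_rotate[symmetric] by simp
  then show thesis
    by (rule that) (use xy(3,4) through_F in auto)
qed

lemma mixed_cycle_splits:
  assumes cyc: "B_cycle K i cs" and "\<not> set cs \<subseteq> A" "\<not> set cs \<subseteq> B"
  shows "\<exists>c1 c2. B_cycle K i c1 \<and> B_cycle K i c2 \<and> length c1 < length cs \<and> length c2 < length cs \<and>
    cycle_sign ori c1 * cycle_sign ori c2 = cycle_sign ori cs"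
proof -
  obtain a b where a: "a \<in> set cs" "a \<notin> B" and b: "b \<in> set cs" "b \<notin> A"
    using assms B_cycle_faces[OF cyc] K_eq by auto
  obtain n x P1 y P2 where rot: "rotate n cs = x # P1 @ y # P2" and "x \<in> A \<inter> B" "y \<in> A \<inter> B"
      "b \<in> set P1" "a \<in> set P2" and through_F: "F \<in> set cs \<Longrightarrow> x = F \<or> y = F"
    using mixed_cycle_rotation[OF cyc a b] by blast
  moreover have "B_cycle K i (x # P1 @ y # P2)" using cyc rot B_cycle_rotate by metis
  moreover have "F \<in> set (x # P1 @ y # P2) \<Longrightarrow> x = F \<or> y = F"
    using through_F by (metis rot set_rotate)
  ultimately have "\<exists>c1 c2. B_cycle K i c1 \<and> B_cycle K i c2 \<and>
      length c1 < length (rotate n cs) \<and> length c2 < length (rotate n cs) \<and>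
      cycle_sign ori c1 * cycle_sign ori c2 = cycle_sign ori (rotate n cs)"
    unfolding rot using split_at_common_faces a(2) b(2) by blast
  then show ?thesis by (simp add: cycle_sign_rotate)
qed

theorem B_balanced_iff:
  "B_balanced K ori i \<longleftrightarrow> B_balanced A ori i \<and> B_balanced B ori i"
proof (intro iffI conjI)
  assume "B_balanced K ori i"
  then show "B_balanced A ori i" "B_balanced B ori i"
    unfolding B_balanced_def using B_cycle_mono K_eq by blast+
next
  assume bal: "B_balanced A ori i \<and> B_balanced B ori i"
  have "B_cycle K i cs \<Longrightarrow> cycle_sign ori cs = 1" for cs
  proof (induction "length cs" arbitrary: cs rule: less_induct)
    case less
    show ?case
    proof (cases "set cs \<subseteq> A \<or> set cs \<subseteq> B")
      case True
      then show ?thesis using bal B_cycle_restrict less.prems unfolding B_balanced_def by blast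
    next
      case False
      then obtain c1 c2 where "B_cycle K i c1" "B_cycle K i c2" "length c1 < length cs"
        "length c2 < length cs" "cycle_sign ori c1 * cycle_sign ori c2 = cycle_sign ori cs"
        using mixed_cycle_splits[OF less.prems] by blast
      then show ?thesis using less.hyps by (metis mult_1)
    qed
  qed
  then show "B_balanced K ori i" unfolding B_balanced_def by blast
qed

end

section \<open>Wedge sums\<close>

lemma down_closed_simplicial_complex: "simplicial_complex K \<Longrightarrow> down_closed K"
  unfolding simplicial_complex_def down_closed_def by blast

lemma down_closed_image: "down_closed K \<Longrightarrow> down_closed ((`) g ` K)"
  unfolding down_closed_def
proof (intro ballI allI impI)
  fix G H assume closed: "\<forall>G\<in>K. \<forall>H. H \<subseteq> G \<and> H \<noteq> {} \<longrightarrow> H \<in> K"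
    and "G \<in> (`) g ` K" and H: "H \<subseteq> G \<and> H \<noteq> {}"
  then obtain G0 where G0: "G0 \<in> K" "G = g ` G0" by auto
  let ?H0 = "{v \<in> G0. g v \<in> H}"
  have "?H0 \<subseteq> G0" "?H0 \<noteq> {}" using H G0 by auto
  then have "?H0 \<in> K" using closed G0(1) by blast
  moreover have "g ` ?H0 = H" using H G0 by auto
  ultimately show "H \<in> (`) g ` K" by blast
qed

lemma orientation_subset: "orientation K ori \<Longrightarrow> A \<subseteq> K \<Longrightarrow> orientation A ori"
  unfolding orientation_def by auto

lemma inj_on_wedge_map:
  assumes "inj_on f F2" "f ` F2 \<inter> (V - F2) = {}"
  shows "inj_on (wedge_map F2 f) V"
proof (rule inj_onI)
  fix u v assume "u \<in> V" "v \<in> V" "wedge_map F2 f u = wedge_map F2 f v"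
  with assms show "u = v"
    unfolding wedge_map_def by (auto split: if_splits dest: inj_onD)
qed

lemma wedge_map_image_eq: "wedge_map F2 f ` F2 = f ` F2"
  unfolding wedge_map_def by simp

lemma common_faces_wedge:
  assumes "\<Union>K1 \<inter> \<Union>K2 = {}" "f ` F2 \<subseteq> F1" "G \<in> K1" "G \<in> (`) (wedge_map F2 f) ` K2"
  shows "G \<subseteq> F1"
proof
  fix w assume "w \<in> G"
  with assms(4) obtain H v where v: "H \<in> K2" "v \<in> H" "w = wedge_map F2 f v" by auto
  show "w \<in> F1"
  proof (cases "v \<in> F2")
    case True
    with v assms(2) show ?thesis unfolding wedge_map_def by auto
  next
    case False
    with v have "w \<in> \<Union>K2" unfolding wedge_map_def by auto
    moreover have "w \<in> \<Union>K1" using \<open>w \<in> G\<close> assms(3) by auto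
    ultimately show ?thesis using assms(1) by blast
  qed
qed

lemma gluing_wedge_sum:
  assumes "simplicial_complex K1" "simplicial_complex K2" "\<Union>K1 \<inter> \<Union>K2 = {}"
    and "F1 \<in> faces_of_dim K1 k" "F2 \<in> faces_of_dim K2 k" "bij_betw f F2 F1" "k \<le> i + 1"
  shows "gluing (wedge_sum K1 K2 F2 f) K1 ((`) (wedge_map F2 f) ` K2) F1 i"
proof
  have F: "F1 \<in> K1" "card F1 = k + 1" "F2 \<in> K2" "f ` F2 = F1"
    using assms(4-6) unfolding faces_of_dim_def bij_betw_def by auto
  show "wedge_sum K1 K2 F2 f = K1 \<union> (`) (wedge_map F2 f) ` K2" unfolding wedge_sum_def ..
  show "down_closed K1" using assms(1) by (rule down_closed_simplicial_complex)
  show "down_closed ((`) (wedge_map F2 f) ` K2)"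
    using assms(2) by (intro down_closed_image down_closed_simplicial_complex)
  show "F1 \<in> K1" by (rule F(1))
  show "F1 \<in> (`) (wedge_map F2 f) ` K2" using F by (metis image_eqI wedge_map_image_eq)
  show "finite F1" using F(2) by (simp add: card_ge_0_finite)
  show "G \<subseteq> F1" if "G \<in> K1" "G \<in> (`) (wedge_map F2 f) ` K2" for G
    using common_faces_wedge[OF assms(3) _ that] F(4) by blast
  show "card F1 \<le> i + 2" using F(2) assms(7) by simp
qed

theorem mainTheorem5:
  fixes K1 K2 :: "'v set set" and F1 F2 :: "'v set" and f :: "'v \<Rightarrow> 'v"
    and k i :: nat and ori ori1 ori2 :: "'v set \<Rightarrow> 'v list"
  assumes "simplicial_complex K1" and "simplicial_complex K2"
    and "\<Union>K1 \<inter> \<Union>K2 = {}"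
    and "F1 \<in> faces_of_dim K1 k" and "F2 \<in> faces_of_dim K2 k"
    and "bij_betw f F2 F1"
    and "k \<le> i + 1"
    and "orientation (wedge_sum K1 K2 F2 f) ori"
    and "orientation K1 ori1" and "orientation K2 ori2"
  shows "B_balanced (wedge_sum K1 K2 F2 f) ori i \<longleftrightarrow>
           B_balanced K1 ori1 i \<and> B_balanced K2 ori2 i"
proof -
  let ?K2' = "(`) (wedge_map F2 f) ` K2"
  have K: "wedge_sum K1 K2 F2 f = K1 \<union> ?K2'" unfolding wedge_sum_def ..
  have "F1 \<in> K1" "f ` F2 = F1" "inj_on f F2"
    using assms(4,6) unfolding faces_of_dim_def bij_betw_def by auto
  then have inj: "inj_on (wedge_map F2 f) (\<Union>K2)"
    using assms(3) by (intro inj_on_wedge_map) auto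
  have "orientation K1 ori" "orientation ?K2' ori"
    using orientation_subset[OF assms(8)] K by auto
  then have "B_balanced K1 ori i \<longleftrightarrow> B_balanced K1 ori1 i"
    and "B_balanced ?K2' ori i \<longleftrightarrow> B_balanced K2 ori2 i"
    using B_balanced_reorient assms(9) B_balanced_image_iff[OF inj _ assms(10)] by blast+
  with gluing.B_balanced_iff[OF gluing_wedge_sum[OF assms(1-7)]] show ?thesis by simp
qed

end
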